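(* Let $n$ items have positive integer sizes $w_1\le w_2\le\dots\le w_n$, with total size $W=\sum_{i=1}^n w_i$, and let there be $m$ bins, bin $j$ having positive integer capacity $C_j$, fixed cost $f_j\ge 0$ and unit cost $c_j\ge 0$, where $\sum_{j=1}^m C_j\ge W$. For each bin set $r_j=f_j/C_j+c_j$, let $a_1,\dots,a_m$ be a permutation of $\{1,\dots,m\}$ with $r_{a_1}\le r_{a_2}\le\dots\le r_{a_m}$, and let $k$ be the minimum integer such that $\sum_{j=1}^{k}C_{a_j}\ge W$. Define $$Lb_1=\sum_{j=1}^{k-1}C_{a_j}r_{a_j}+\Big(W-\sum_{j=1}^{k-1}C_{a_j}\Big)r_{a_k}.$$ Let $z_1^*$ be the optimal value of the linear program $$\min \sum_{j=1}^m (f_jy_j+c_jl_j)$$ subject to $\sum_{j=1}^m x_{ij}=1$ for all $i\in\{1,\dots,n\}$; $\sum_{i=1}^n w_ix_{ij}=l_j$ for all $j\in\{1,\dots,m\}$; $l_j\le C_jy_j$ for all $j$; $0\le x_{ij}\le 1$, $0\le y_j\le 1$, $l_j\ge 0$ for all $i,j$. Then $z_1^*\ge Lb_1$.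
   Context: This linear program is the linear relaxation of an integer program for the Bin Packing with Usage Cost problem, in which each item is assigned to exactly one bin, the load $l_j$ of bin $j$ (total size of its items) may not exceed $C_j$, and a used bin $j$ costs $f_j+c_jl_j$; $y_j$ indicates whether bin $j$ is used and $x_{ij}$ whether item $i$ is in bin $j$. *)

theory Defs
  imports Complex_Main
begin

text \<open>Items are indexed by 1..n, bins by 1..m. The LP relaxation of BPUC:
  x i j = fraction of item i in bin j, y j = usage of bin j, l j = load of bin j.\<close>

definition lp_feasible ::
  "nat \<Rightarrow> nat \<Rightarrow> (nat \<Rightarrow> nat) \<Rightarrow> (nat \<Rightarrow> nat) \<Rightarrow>
   (nat \<Rightarrow> nat \<Rightarrow> real) \<Rightarrow> (nat \<Rightarrow> real) \<Rightarrow> (nat \<Rightarrow> real) \<Rightarrow> bool" where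
  "lp_feasible n m w C x y l \<longleftrightarrow>
     (\<forall>i\<in>{1..n}. (\<Sum>j=1..m. x i j) = 1) \<and>
     (\<forall>j\<in>{1..m}. (\<Sum>i=1..n. real (w i) * x i j) = l j) \<and>
     (\<forall>j\<in>{1..m}. l j \<le> real (C j) * y j) \<and>
     (\<forall>i\<in>{1..n}. \<forall>j\<in>{1..m}. 0 \<le> x i j \<and> x i j \<le> 1) \<and>
     (\<forall>j\<in>{1..m}. 0 \<le> y j \<and> y j \<le> 1 \<and> 0 \<le> l j)"

definition lp_objective ::
  "nat \<Rightarrow> (nat \<Rightarrow> real) \<Rightarrow> (nat \<Rightarrow> real) \<Rightarrow> (nat \<Rightarrow> real) \<Rightarrow> (nat \<Rightarrow> real) \<Rightarrow> real" where
  "lp_objective m f c y l = (\<Sum>j=1..m. f j * y j + c j * l j)"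

definition lp_opt ::
  "nat \<Rightarrow> nat \<Rightarrow> (nat \<Rightarrow> nat) \<Rightarrow> (nat \<Rightarrow> nat) \<Rightarrow> (nat \<Rightarrow> real) \<Rightarrow> (nat \<Rightarrow> real) \<Rightarrow> real" where
  "lp_opt n m w C f c =
     Inf {lp_objective m f c y l | x y l. lp_feasible n m w C x y l}"

end

theory Submission
  imports Defs
begin

text \<open>Dividing the fixed cost of a bin over its capacity, every feasible solution of the LP
  costs at least \<open>\<Sum>\<^sub>j r\<^sub>j l\<^sub>j\<close>, where the loads \<open>l\<^sub>j\<close> lie in \<open>[0, C\<^sub>j]\<close> and add up to \<open>W\<close>.
  Minimising this linear function over such loads is a fractional knapsack problem, which is
  solved greedily: fill the bins to capacity in order of increasing rate \<open>r\<close> until \<open>W\<close> is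
  reached. The value of the greedy solution is \<open>Lb\<^sub>1\<close>.\<close>

lemma fractional_greedy_le:
  fixes \<rho> L u :: "nat \<Rightarrow> real"
  assumes mono: "mono_on {1..m} \<rho>"
    and L_nonneg: "\<And>t. t \<in> {1..m} \<Longrightarrow> 0 \<le> L t"
    and L_le: "\<And>t. t \<in> {1..m} \<Longrightarrow> L t \<le> u t"
    and k: "k \<in> {1..m}"
  shows "(\<Sum>t=1..k-1. u t * \<rho> t) + ((\<Sum>t=1..m. L t) - (\<Sum>t=1..k-1. u t)) * \<rho> k
           \<le> (\<Sum>t=1..m. \<rho> t * L t)"
proof -
  have split: "(\<Sum>t=1..m. g t) = (\<Sum>t=1..k-1. g t) + (\<Sum>t=k..m. g t)" for g :: "nat \<Rightarrow> real"
  proof -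
    have "{1..m} = {1..k-1} \<union> {k..m}" using k by auto
    then show ?thesis by (simp add: sum.union_disjoint)
  qed
  have below: "(\<Sum>t=1..k-1. u t * \<rho> t) - (\<Sum>t=1..k-1. u t) * \<rho> k
      \<le> (\<Sum>t=1..k-1. \<rho> t * L t) - (\<Sum>t=1..k-1. L t) * \<rho> k"
  proof -
    have "(\<Sum>t=1..k-1. (\<rho> t - \<rho> k) * u t) \<le> (\<Sum>t=1..k-1. (\<rho> t - \<rho> k) * L t)"
    proof (rule sum_mono)
      fix t assume t: "t \<in> {1..k-1}"
      then have "\<rho> t \<le> \<rho> k" using k by (intro mono_onD[OF mono]) auto
      with t k L_le show "(\<rho> t - \<rho> k) * u t \<le> (\<rho> t - \<rho> k) * L t"
        by (intro mult_left_mono_neg) auto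
    qed
    then show ?thesis
      by (simp add: algebra_simps sum_subtractf sum_distrib_left sum_distrib_right)
  qed
  have above: "(\<Sum>t=k..m. L t) * \<rho> k \<le> (\<Sum>t=k..m. \<rho> t * L t)"
    unfolding sum_distrib_right
  proof (rule sum_mono)
    fix t assume t: "t \<in> {k..m}"
    then have "\<rho> k \<le> \<rho> t" using k by (intro mono_onD[OF mono]) auto
    moreover have "0 \<le> L t" using t k L_nonneg by simp
    ultimately show "L t * \<rho> k \<le> \<rho> t * L t"
      by (metis mult.commute mult_left_mono)
  qed
  from below above show ?thesis
    unfolding split[of L] split[of "\<lambda>t. \<rho> t * L t"] by (simp add: algebra_simps)
qed

lemma lp_feasible_total_load:
  assumes "lp_feasible n m w C x y l"
  shows "(\<Sum>j=1..m. l j) = (\<Sum>i=1..n. real (w i))"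
proof -
  have "(\<Sum>j=1..m. l j) = (\<Sum>j=1..m. \<Sum>i=1..n. real (w i) * x i j)"
    using assms by (simp add: lp_feasible_def)
  also have "\<dots> = (\<Sum>i=1..n. real (w i) * (\<Sum>j=1..m. x i j))"
    by (subst sum.swap) (simp add: sum_distrib_left)
  also have "\<dots> = (\<Sum>i=1..n. real (w i))"
    using assms by (simp add: lp_feasible_def)
  finally show ?thesis .
qed

lemma lp_objective_nonneg:
  assumes "lp_feasible n m w C x y l"
    and "\<forall>j\<in>{1..m}. 0 \<le> f j" and "\<forall>j\<in>{1..m}. 0 \<le> c j"
  shows "0 \<le> lp_objective m f c y l"
  using assms unfolding lp_objective_def lp_feasible_def by (intro sum_nonneg) auto

lemma lp_objective_ge_rate_load:
  assumes "lp_feasible n m w C x y l"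
    and C_pos: "\<forall>j\<in>{1..m}. 0 < C j" and f_nonneg: "\<forall>j\<in>{1..m}. 0 \<le> f j"
  shows "(\<Sum>j=1..m. (f j / real (C j) + c j) * l j) \<le> lp_objective m f c y l"
  unfolding lp_objective_def
proof (rule sum_mono)
  fix j assume j: "j \<in> {1..m}"
  with assms(1) have "l j \<le> real (C j) * y j"
    by (simp add: lp_feasible_def)
  with j C_pos have "l j / real (C j) \<le> y j"
    by (simp add: divide_simps mult.commute)
  with j f_nonneg have "f j * (l j / real (C j)) \<le> f j * y j"
    by (intro mult_left_mono) auto
  then show "(f j / real (C j) + c j) * l j \<le> f j * y j + c j * l j"
    by (simp add: algebra_simps)
qed

lemma lp_feasible_exists:
  assumes w_pos: "\<forall>i\<in>{1..n}. 0 < w i"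
    and cap: "(\<Sum>i=1..n. w i) \<le> (\<Sum>j=1..m. C j)"
  shows "\<exists>x y l. lp_feasible n m w C x y l"
proof (cases "n = 0")
  case True
  then have "lp_feasible n m w C (\<lambda>_ _. 0) (\<lambda>_. 0) (\<lambda>_. 0)"
    by (simp add: lp_feasible_def)
  then show ?thesis by blast
next
  case False
  define S where "S = real (\<Sum>j=1..m. C j)"
  have "0 < w 1" using w_pos False by simp
  also have "w 1 \<le> (\<Sum>i=1..n. w i)" using False by (intro member_le_sum) auto
  finally have S_pos: "0 < S" using cap unfolding S_def by linarith
  have C_le_S: "real (C j) \<le> S" if "j \<in> {1..m}" for j
    unfolding S_def of_nat_le_iff using that by (intro member_le_sum) auto
  define x where "x i j = real (C j) / S" for i j :: nat
  define l where "l j = real (\<Sum>i=1..n. w i) * real (C j) / S" for j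
  have "lp_feasible n m w C x (\<lambda>_. 1) l"
    unfolding lp_feasible_def
  proof (intro conjI ballI)
    fix i show "(\<Sum>j=1..m. x i j) = 1"
      using S_pos by (simp add: x_def S_def flip: sum_divide_distrib)
  next
    fix j show "(\<Sum>i=1..n. real (w i) * x i j) = l j"
      by (simp add: x_def l_def sum_distrib_right sum_divide_distrib)
  next
    fix j
    have "real (\<Sum>i=1..n. w i) * real (C j) \<le> S * real (C j)"
      using cap unfolding S_def
      by (intro mult_right_mono) (simp_all only: of_nat_le_iff of_nat_0_le_iff)
    then show "l j \<le> real (C j) * 1"
      using S_pos by (simp add: l_def divide_simps mult.commute)
  qed (use S_pos C_le_S in \<open>auto simp: x_def l_def sum_nonneg\<close>)
  then show ?thesis by blast
qed

lemma lp_objective_ge_greedy_bound: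
  fixes r :: "nat \<Rightarrow> real" and a :: "nat \<Rightarrow> nat" and k W :: nat
  assumes feas: "lp_feasible n m w C x y l"
    and W_def: "W = (\<Sum>i=1..n. w i)"
    and C_pos: "\<forall>j\<in>{1..m}. 0 < C j"
    and f_nonneg: "\<forall>j\<in>{1..m}. 0 \<le> f j"
    and c_nonneg: "\<forall>j\<in>{1..m}. 0 \<le> c j"
    and cap: "(\<Sum>j=1..m. C j) \<ge> W"
    and r_def: "\<forall>j. r j = f j / real (C j) + c j"
    and a_perm: "bij_betw a {1..m} {1..m}"
    and a_sorted: "\<forall>j1 j2. 1 \<le> j1 \<and> j1 \<le> j2 \<and> j2 \<le> m \<longrightarrow> r (a j1) \<le> r (a j2)"
    and k_def: "k = (LEAST k. (\<Sum>j=1..k. C (a j)) \<ge> W)"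
  shows "(\<Sum>j=1..k-1. real (C (a j)) * r (a j))
           + (real W - real (\<Sum>j=1..k-1. C (a j))) * r (a k) \<le> lp_objective m f c y l"
proof (cases "W = 0")
  case True
  then have "k = 0" using k_def by (simp add: Least_eq_0)
  with True show ?thesis using lp_objective_nonneg[OF feas f_nonneg c_nonneg] by simp
next
  case False
  have a_in: "a t \<in> {1..m}" if "t \<in> {1..m}" for t
    using a_perm that by (auto simp: bij_betw_def)
  have "(\<Sum>j=1..m. C (a j)) \<ge> W"
    using sum.reindex_bij_betw[OF a_perm, of C] cap by simp
  then have "k \<le> m" "(\<Sum>j=1..k. C (a j)) \<ge> W"
    unfolding k_def by (auto intro: Least_le LeastI)
  with False have "k \<in> {1..m}" by (cases k) auto
  moreover have "mono_on {1..m} (\<lambda>t. r (a t))"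
    using a_sorted by (auto intro: mono_onI)
  moreover have "0 \<le> l (a t) \<and> l (a t) \<le> real (C (a t))" if "t \<in> {1..m}" for t
  proof -
    from feas a_in[OF that] have "0 \<le> l (a t)" "l (a t) \<le> real (C (a t)) * y (a t)"
      and "y (a t) \<le> 1" by (auto simp: lp_feasible_def)
    then show ?thesis by (smt (verit) mult_left_le of_nat_0_le_iff)
  qed
  ultimately have "(\<Sum>t=1..k-1. real (C (a t)) * r (a t))
      + ((\<Sum>t=1..m. l (a t)) - (\<Sum>t=1..k-1. real (C (a t)))) * r (a k)
      \<le> (\<Sum>t=1..m. r (a t) * l (a t))"
    by (intro fractional_greedy_le) auto
  also have "\<dots> = (\<Sum>j=1..m. r j * l j)"
    using sum.reindex_bij_betw[OF a_perm, of "\<lambda>j. r j * l j"] by simp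
  also have "\<dots> \<le> lp_objective m f c y l"
    using lp_objective_ge_rate_load[OF feas C_pos f_nonneg] r_def by simp
  finally show ?thesis
    using sum.reindex_bij_betw[OF a_perm, of l] lp_feasible_total_load[OF feas] W_def by simp
qed

theorem proposition1:
  fixes n m :: nat and w C :: "nat \<Rightarrow> nat" and f c r :: "nat \<Rightarrow> real"
    and a :: "nat \<Rightarrow> nat" and k W :: nat
  assumes w_pos: "\<forall>i\<in>{1..n}. 0 < w i"
    and w_sorted: "\<forall>i1 i2. 1 \<le> i1 \<and> i1 \<le> i2 \<and> i2 \<le> n \<longrightarrow> w i1 \<le> w i2"
    and W_def: "W = (\<Sum>i=1..n. w i)"
    and C_pos: "\<forall>j\<in>{1..m}. 0 < C j"
    and f_nonneg: "\<forall>j\<in>{1..m}. 0 \<le> f j"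
    and c_nonneg: "\<forall>j\<in>{1..m}. 0 \<le> c j"
    and cap: "(\<Sum>j=1..m. C j) \<ge> W"
    and r_def: "\<forall>j. r j = f j / real (C j) + c j"
    and a_perm: "bij_betw a {1..m} {1..m}"
    and a_sorted: "\<forall>j1 j2. 1 \<le> j1 \<and> j1 \<le> j2 \<and> j2 \<le> m \<longrightarrow> r (a j1) \<le> r (a j2)"
    and k_def: "k = (LEAST k. (\<Sum>j=1..k. C (a j)) \<ge> W)"
  shows "lp_opt n m w C f c \<ge>
           (\<Sum>j=1..k-1. real (C (a j)) * r (a j))
           + (real W - real (\<Sum>j=1..k-1. C (a j))) * r (a k)"
  unfolding lp_opt_def
proof (rule cInf_greatest)
  show "{lp_objective m f c y l |x y l. lp_feasible n m w C x y l} \<noteq> {}"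
    using lp_feasible_exists[OF w_pos] cap W_def by auto
next
  fix z assume "z \<in> {lp_objective m f c y l |x y l. lp_feasible n m w C x y l}"
  then show "(\<Sum>j=1..k-1. real (C (a j)) * r (a j))
      + (real W - real (\<Sum>j=1..k-1. C (a j))) * r (a k) \<le> z"
    using lp_objective_ge_greedy_bound[OF _ W_def C_pos f_nonneg c_nonneg cap r_def a_perm
        a_sorted k_def] by blast
qed

end
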